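(* Let $\epsilon\ge 0$ and let $\mathcal{G}$ be a weighted congestion game with latency functions $\ell_e(x)=\alpha_e x$, $\alpha_e\ge 0$. Define, for every strategy profile $S=(s_1,\dots,s_n)$, $$\Phi_\epsilon(S)=\frac12\sum_{e\in E}\alpha_e L_e(S)^2+\frac12\cdot\frac{1-\epsilon}{1+\epsilon}\sum_{e\in E}\sum_{i:\,e\in s_i}\alpha_e w_i^2 .$$ If $S$ is a local minimum of $\Phi_\epsilon$, i.e., $\Phi_\epsilon(S)\le\Phi_\epsilon(S_{-i}\diamond t)$ for every $i\in[n]$ and every $t\in\Sigma_i$, then $S$ is an $\epsilon$-PNE.
   Context: A weighted congestion game consists of a finite set $[n]=\{1,\dots,n\}$ of players, a finite set $E$ of resources, for each player $i$ a weight $w_i>0$ and a nonempty finite strategy set $\Sigma_i\subseteq 2^E$, and for each resource $e$ a latency function $\ell_e:\mathbb{R}_{\ge 0}\to\mathbb{R}_{\ge 0}$. For a strategy profile $S=(s_1,\dots,s_n)\in\prod_i\Sigma_i$, the congestion of $e$ is $L_e(S)=\sum_{i:\,e\in s_i}w_i$ and the cost of player $i$ is $c_i(S)=\sum_{e\in s_i}\ell_e(L_e(S))$. For $t\in\Sigma_i$, $(S_{-i}\diamond t)$ denotes the profile obtained from $S$ by replacing $s_i$ with $t$. For $\epsilon\ge 0$, $S$ is an $\epsilon$-approximate pure Nash equilibrium ($\epsilon$-PNE) if $c_i(S)\le(1+\epsilon)c_i(S_{-i}\diamond t)$ for all $i\in[n]$ and all $t\in\Sigma_i$. *)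

theory Defs
  imports Complex_Main
begin

text \<open>A strategy profile is a function
  S :: nat => 'e set (only values at players 1..n matter). The deviation
  (S_{-i} <> t) is the function update S(i := t).\<close>

definition weighted_congestion_game ::
  "nat \<Rightarrow> 'e set \<Rightarrow> (nat \<Rightarrow> real) \<Rightarrow> (nat \<Rightarrow> 'e set set) \<Rightarrow> ('e \<Rightarrow> real \<Rightarrow> real) \<Rightarrow> bool" where
  "weighted_congestion_game n E w Strat lat \<longleftrightarrow>
     finite E \<and>
     (\<forall>i\<in>{1..n}. w i > 0 \<and> Strat i \<noteq> {} \<and> finite (Strat i) \<and> (\<forall>s\<in>Strat i. s \<subseteq> E)) \<and>
     (\<forall>e\<in>E. \<forall>x\<ge>0. lat e x \<ge> 0)"

definition is_profile :: "nat \<Rightarrow> (nat \<Rightarrow> 'e set set) \<Rightarrow> (nat \<Rightarrow> 'e set) \<Rightarrow> bool" where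
  "is_profile n Strat S \<longleftrightarrow> (\<forall>i\<in>{1..n}. S i \<in> Strat i)"

definition congestion :: "nat \<Rightarrow> (nat \<Rightarrow> real) \<Rightarrow> (nat \<Rightarrow> 'e set) \<Rightarrow> 'e \<Rightarrow> real" where
  "congestion n w S e = (\<Sum>i\<in>{i\<in>{1..n}. e \<in> S i}. w i)"

definition player_cost ::
  "nat \<Rightarrow> (nat \<Rightarrow> real) \<Rightarrow> ('e \<Rightarrow> real \<Rightarrow> real) \<Rightarrow> (nat \<Rightarrow> 'e set) \<Rightarrow> nat \<Rightarrow> real" where
  "player_cost n w lat S i = (\<Sum>e\<in>S i. lat e (congestion n w S e))"

definition approx_PNE ::
  "real \<Rightarrow> nat \<Rightarrow> (nat \<Rightarrow> real) \<Rightarrow> (nat \<Rightarrow> 'e set set) \<Rightarrow> ('e \<Rightarrow> real \<Rightarrow> real) \<Rightarrow> (nat \<Rightarrow> 'e set) \<Rightarrow> bool" where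
  "approx_PNE \<epsilon> n w Strat lat S \<longleftrightarrow>
     (\<forall>i\<in>{1..n}. \<forall>t\<in>Strat i.
        player_cost n w lat S i \<le> (1 + \<epsilon>) * player_cost n w lat (S(i := t)) i)"

definition Phi_eps ::
  "real \<Rightarrow> nat \<Rightarrow> 'e set \<Rightarrow> (nat \<Rightarrow> real) \<Rightarrow> ('e \<Rightarrow> real) \<Rightarrow> (nat \<Rightarrow> 'e set) \<Rightarrow> real" where
  "Phi_eps \<epsilon> n E w \<alpha> S =
     1/2 * (\<Sum>e\<in>E. \<alpha> e * (congestion n w S e)^2)
     + 1/2 * ((1 - \<epsilon>) / (1 + \<epsilon>)) *
         (\<Sum>e\<in>E. \<Sum>i\<in>{i\<in>{1..n}. e \<in> S i}. \<alpha> e * (w i)^2)"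

end

theory Submission
  imports Defs
begin

(* Fix a player i with current strategy s = S i, a deviation t, and write
   S' = S(i := t), W = w i, L = L_e(S), L' = L_e(S').  The potential is a sum
   of per-resource terms, and a unilateral deviation changes the term of e by
   an amount D_e that satisfies the exact identity
     (1+eps) D_e = W ((1+eps) [e:t] alpha_e L' - [e:s] alpha_e L - eps R_e),
     R_e = alpha_e ([e:s] (L - W) + [e:t] W)  >=  0,
   where R_e >= 0 because e : s forces L >= W.  Summing over E gives
     (1+eps) (Phi(S') - Phi(S)) <= W ((1+eps) c_i(S') - c_i(S)),
   so at a local minimum of Phi (left side >= 0, W > 0) we get
   c_i(S) <= (1+eps) c_i(S'), i.e. S is an eps-PNE. *)

lemma sum_users_update:
  fixes f :: "nat \<Rightarrow> real"
  assumes "i \<in> {1..n}"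
  shows "(\<Sum>j\<in>{j\<in>{1..n}. e \<in> (S(i := t)) j}. f j)
       = (\<Sum>j\<in>{j\<in>{1..n}. e \<in> S j}. f j) - of_bool (e \<in> S i) * f i + of_bool (e \<in> t) * f i"
proof -
  let ?A = "{j\<in>{1..n}. e \<in> S j}" and ?B = "{j\<in>{1..n}. e \<in> (S(i := t)) j}"
  have "sum f (?A - {i}) = sum f ?A - of_bool (e \<in> S i) * f i"
    using sum_diff1[of ?A f i] assms by auto
  moreover have "sum f (?B - {i}) = sum f ?B - of_bool (e \<in> t) * f i"
    using sum_diff1[of ?B f i] assms by auto
  moreover have "?B - {i} = ?A - {i}" by auto
  ultimately show ?thesis by (metis add_diff_cancel diff_add_cancel)
qed

lemma congestion_update:
  assumes "i \<in> {1..n}"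
  shows "congestion n w (S(i := t)) e = congestion n w S e - of_bool (e \<in> S i) * w i + of_bool (e \<in> t) * w i"
  unfolding congestion_def by (rule sum_users_update[OF assms])

lemma congestion_ge_weight:
  assumes "\<forall>j\<in>{1..n}. w j \<ge> 0" and "i \<in> {1..n}" and "e \<in> S i"
  shows "w i \<le> congestion n w S e"
  unfolding congestion_def by (rule member_le_sum) (use assms in auto)

definition resource_potential ::
  "real \<Rightarrow> nat \<Rightarrow> (nat \<Rightarrow> real) \<Rightarrow> ('e \<Rightarrow> real) \<Rightarrow> (nat \<Rightarrow> 'e set) \<Rightarrow> 'e \<Rightarrow> real" where
  "resource_potential \<epsilon> n w \<alpha> S e =
     1/2 * \<alpha> e * (congestion n w S e)^2
     + 1/2 * ((1 - \<epsilon>) / (1 + \<epsilon>)) * (\<Sum>j\<in>{j\<in>{1..n}. e \<in> S j}. \<alpha> e * (w j)^2)"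

lemma Phi_eps_resource_sum:
  "Phi_eps \<epsilon> n E w \<alpha> S = (\<Sum>e\<in>E. resource_potential \<epsilon> n w \<alpha> S e)"
  unfolding Phi_eps_def resource_potential_def
  by (simp add: sum.distrib sum_distrib_left mult.assoc)

lemma deviation_identity:
  fixes a L W \<epsilon> :: real and \<sigma> \<tau> :: bool
  assumes "1 + \<epsilon> \<noteq> 0"
  defines "L' \<equiv> L - of_bool \<sigma> * W + of_bool \<tau> * W"
  shows "(1 + \<epsilon>) * (1/2 * a * (L'^2 - L^2)
            + 1/2 * ((1 - \<epsilon>) / (1 + \<epsilon>)) * (- of_bool \<sigma> * (a * W^2) + of_bool \<tau> * (a * W^2)))
       = W * ((1 + \<epsilon>) * (of_bool \<tau> * a * L') - of_bool \<sigma> * a * L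
              - \<epsilon> * (a * (of_bool \<sigma> * (L - W) + of_bool \<tau> * W)))"
  using assms by (cases \<sigma>; cases \<tau>) (simp_all add: field_simps power2_eq_square)

lemma resource_potential_change:
  assumes "i \<in> {1..n}" and "1 + \<epsilon> \<noteq> 0"
  shows "(1 + \<epsilon>) * (resource_potential \<epsilon> n w \<alpha> (S(i := t)) e - resource_potential \<epsilon> n w \<alpha> S e)
       = w i * ((1 + \<epsilon>) * (of_bool (e \<in> t) * (\<alpha> e * congestion n w (S(i := t)) e))
                - of_bool (e \<in> S i) * (\<alpha> e * congestion n w S e)
                - \<epsilon> * (\<alpha> e * (of_bool (e \<in> S i) * (congestion n w S e - w i) + of_bool (e \<in> t) * w i)))"
  using deviation_identity[OF assms(2), of "\<alpha> e" "congestion n w S e" "e \<in> S i" "w i" "e \<in> t"]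
  unfolding resource_potential_def congestion_update[OF assms(1)]
    sum_users_update[OF assms(1), of "\<lambda>j. \<alpha> e * (w j)^2"]
  by (simp add: algebra_simps)

lemma sum_indicator_subset:
  fixes f :: "'e \<Rightarrow> real"
  assumes "finite E" and "A \<subseteq> E"
  shows "(\<Sum>e\<in>E. of_bool (e \<in> A) * f e) = sum f A"
proof -
  have "(\<Sum>e\<in>E. of_bool (e \<in> A) * f e) = (\<Sum>e\<in>E. if e \<in> A then f e else 0)"
    by (rule sum.cong) auto
  also have "\<dots> = sum f (E \<inter> A)" by (rule sum.inter_restrict[OF assms(1), symmetric])
  finally show ?thesis using assms(2) by (simp add: Int_absorb1)
qed

text \<open>Summed form: the scaled potential change bounds the weighted cost change of
  the deviating player from below (the correction terms \<epsilon> R_e are nonnegative).\<close>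

lemma potential_change_bounds_cost:
  assumes eps: "\<epsilon> \<ge> 0" and alpha: "\<forall>e\<in>E. \<alpha> e \<ge> 0"
    and game: "weighted_congestion_game n E w Strat (\<lambda>e x. \<alpha> e * x)"
    and i: "i \<in> {1..n}" and s: "S i \<in> Strat i" and t: "t \<in> Strat i"
  shows "(1 + \<epsilon>) * (Phi_eps \<epsilon> n E w \<alpha> (S(i := t)) - Phi_eps \<epsilon> n E w \<alpha> S)
       \<le> w i * ((1 + \<epsilon>) * player_cost n w (\<lambda>e x. \<alpha> e * x) (S(i := t)) i
                - player_cost n w (\<lambda>e x. \<alpha> e * x) S i)"
proof -
  have fin: "finite E" and w_nonneg: "\<forall>j\<in>{1..n}. w j \<ge> 0" and wi: "w i > 0"
    and sE: "S i \<subseteq> E" and tE: "t \<subseteq> E"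
    using game i s t unfolding weighted_congestion_game_def by (auto simp: less_imp_le)
  define L where "L = congestion n w S"
  define L' where "L' = congestion n w (S(i := t))"
  define R where "R = (\<lambda>e. \<alpha> e * (of_bool (e \<in> S i) * (L e - w i) + of_bool (e \<in> t) * w i))"
  have R_nonneg: "R e \<ge> 0" if "e \<in> E" for e
    using alpha that wi congestion_ge_weight[OF w_nonneg i, of e S]
    unfolding R_def L_def by (cases "e \<in> S i") auto
  have "(1 + \<epsilon>) * (Phi_eps \<epsilon> n E w \<alpha> (S(i := t)) - Phi_eps \<epsilon> n E w \<alpha> S)
      = (\<Sum>e\<in>E. (1 + \<epsilon>) * (resource_potential \<epsilon> n w \<alpha> (S(i := t)) e - resource_potential \<epsilon> n w \<alpha> S e))"
    by (simp add: Phi_eps_resource_sum sum_distrib_left flip: sum_subtractf)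
  also have "\<dots> = (\<Sum>e\<in>E. w i * ((1 + \<epsilon>) * (of_bool (e \<in> t) * (\<alpha> e * L' e))
                        - of_bool (e \<in> S i) * (\<alpha> e * L e) - \<epsilon> * R e))"
    unfolding L_def L'_def R_def
    by (intro sum.cong refl resource_potential_change[OF i]) (use eps in simp)
  also have "\<dots> = w i * ((1 + \<epsilon>) * (\<Sum>e\<in>t. \<alpha> e * L' e) - (\<Sum>e\<in>S i. \<alpha> e * L e) - \<epsilon> * sum R E)"
    by (simp add: sum_distrib_left sum_subtractf sum_indicator_subset[OF fin sE]
        sum_indicator_subset[OF fin tE] flip: sum_distrib_left)
  also have "\<dots> \<le> w i * ((1 + \<epsilon>) * (\<Sum>e\<in>t. \<alpha> e * L' e) - (\<Sum>e\<in>S i. \<alpha> e * L e))"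
    using wi eps sum_nonneg[of E R] R_nonneg by (simp add: mult_left_mono)
  finally show ?thesis
    unfolding player_cost_def L_def L'_def by simp
qed

theorem mainTheorem5:
  fixes \<epsilon> :: real and n :: nat and E :: "'e set" and w :: "nat \<Rightarrow> real"
    and Strat :: "nat \<Rightarrow> 'e set set" and \<alpha> :: "'e \<Rightarrow> real" and S :: "nat \<Rightarrow> 'e set"
  assumes eps: "\<epsilon> \<ge> 0"
    and alpha: "\<forall>e\<in>E. \<alpha> e \<ge> 0"
    and game: "weighted_congestion_game n E w Strat (\<lambda>e x. \<alpha> e * x)"
    and prof: "is_profile n Strat S"
    and locmin: "\<forall>i\<in>{1..n}. \<forall>t\<in>Strat i. Phi_eps \<epsilon> n E w \<alpha> S \<le> Phi_eps \<epsilon> n E w \<alpha> (S(i := t))"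
  shows "approx_PNE \<epsilon> n w Strat (\<lambda>e x. \<alpha> e * x) S"
  unfolding approx_PNE_def
proof (intro ballI)
  fix i t assume i: "i \<in> {1..n}" and t: "t \<in> Strat i"
  let ?c = "player_cost n w (\<lambda>e x. \<alpha> e * x)"
  have wi: "w i > 0" using game i unfolding weighted_congestion_game_def by auto
  have s: "S i \<in> Strat i" using prof i unfolding is_profile_def by auto
  have "0 \<le> (1 + \<epsilon>) * (Phi_eps \<epsilon> n E w \<alpha> (S(i := t)) - Phi_eps \<epsilon> n E w \<alpha> S)"
    using locmin i t eps by simp
  also have "\<dots> \<le> w i * ((1 + \<epsilon>) * ?c (S(i := t)) i - ?c S i)"
    using eps alpha game i s t by (rule potential_change_bounds_cost)
  finally show "?c S i \<le> (1 + \<epsilon>) * ?c (S(i := t)) i"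
    using wi by (simp add: zero_le_mult_iff)
qed

end
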